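(* Let $j\ge 0$ be an integer and let $g_0^{j+1},\dots,g_j^{j+1}$ be real numbers with $g_j^{j+1}>g_{j-1}^{j+1}>\dots>g_0^{j+1}>0$, where $g_{-1}^{j+1}:=0$. Let $\sigma_{j+1}$ satisfy $$\frac{g_j^{j+1}}{2g_j^{j+1}-g_{j-1}^{j+1}}\le\sigma_{j+1}\le 1 .$$ Then for any real numbers $v^0,\dots,v^{j+1}$, $$\big(\sigma_{j+1}v^{j+1}+(1-\sigma_{j+1})v^j\big)\,{}_g\Delta v\;\ge\;\tfrac12\,{}_g\Delta(v^2),$$ where ${}_g\Delta v:=\sum_{s=0}^{j}(v^{s+1}-v^s)g_s^{j+1}$ and ${}_g\Delta(v^2):=\sum_{s=0}^{j}((v^{s+1})^2-(v^s)^2)g_s^{j+1}$.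
   Context: In the paper this is stated for all $j=0,1,\dots,M-1$ with $v$ a function on a time mesh $0=t_0<\dots<t_M=T$, $v^s=v(t_s)$. *)

theory Defs
  imports Complex_Main
begin

text \<open>Weighted differences with weights g s = g_s^{j+1}, s = 0..j.\<close>
definition gDelta :: "nat \<Rightarrow> (nat \<Rightarrow> real) \<Rightarrow> (nat \<Rightarrow> real) \<Rightarrow> real" where
  "gDelta j g v = (\<Sum>s=0..j. (v (Suc s) - v s) * g s)"

definition gDelta_sq :: "nat \<Rightarrow> (nat \<Rightarrow> real) \<Rightarrow> (nat \<Rightarrow> real) \<Rightarrow> real" where
  "gDelta_sq j g v = (\<Sum>s=0..j. ((v (Suc s))^2 - (v s)^2) * g s)"

definition g_prev :: "nat \<Rightarrow> (nat \<Rightarrow> real) \<Rightarrow> real" where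
  "g_prev j g = (if j = 0 then 0 else g (j - 1))"

end

theory Submission
  imports Defs
begin

text \<open>For every x, completing the square term by term gives
  x * \<Delta>v - \<Delta>(v^2)/2 = \<Sum>s ((x - v s)^2 - (x - v (s+1))^2) g s / 2.
  Summation by parts over nonnegative nondecreasing weights bounds this sum below by its two
  boundary terms at s = j; for x = \<sigma> v (j+1) + (1 - \<sigma>) v j these add up to
  (v (j+1) - v j)^2 ((2\<sigma> - 1) g j - \<sigma>^2 g (j-1)) / 2, which the lower bound on \<sigma> makes
  nonnegative.\<close>

lemma gDelta_completed_square:
  "x * gDelta j g v - gDelta_sq j g v / 2
     = (\<Sum>s=0..j. ((x - v s)^2 - (x - v (Suc s))^2) * g s) / 2"
  unfolding gDelta_def gDelta_sq_def sum_divide_distrib sum_distrib_left sum_subtractf[symmetric]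
  by (rule sum.cong) (simp_all add: power2_eq_square field_simps)

lemma sum_diff_weighted_ge_last:
  fixes a g :: "nat \<Rightarrow> 'a::linordered_idom"
  assumes a_nonneg: "\<And>s. 0 \<le> a s" and g0: "0 \<le> g 0"
    and g_mono: "\<And>s. s < j \<Longrightarrow> g s \<le> g (Suc s)"
  shows "(\<Sum>s=0..j. (a s - a (Suc s)) * g s) \<ge> - a (Suc j) * g j"
  using g_mono
proof (induction j)
  case 0
  have "0 \<le> a 0 * g 0" using a_nonneg g0 by simp
  then show ?case by (simp add: algebra_simps)
next
  case (Suc k)
  have "- a (Suc k) * g k \<ge> - a (Suc k) * g (Suc k)"
    using Suc.prems a_nonneg by (simp add: mult_left_mono)
  with Suc show ?case by (simp add: algebra_simps)
qed

lemma sum_diff_weighted_ge_boundary: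
  fixes a g :: "nat \<Rightarrow> real"
  assumes "\<And>s. 0 \<le> a s" and "0 \<le> g 0" and "\<And>s. s < j \<Longrightarrow> g s \<le> g (Suc s)"
  shows "(\<Sum>s=0..j. (a s - a (Suc s)) * g s) \<ge> a j * (g j - g_prev j g) - a (Suc j) * g j"
proof (cases j)
  case 0
  then show ?thesis by (simp add: g_prev_def algebra_simps)
next
  case (Suc k)
  have "(\<Sum>s=0..k. (a s - a (Suc s)) * g s) \<ge> - a j * g k"
    using sum_diff_weighted_ge_last[of a g k] assms Suc by simp
  then show ?thesis using Suc by (simp add: g_prev_def algebra_simps)
qed

lemma g_prev_bounds:
  fixes g :: "nat \<Rightarrow> real"
  assumes g0: "0 < g 0" and g_mono: "\<And>s. s < j \<Longrightarrow> g s < g (Suc s)"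
  shows "0 \<le> g_prev j g" and "g_prev j g < g j"
proof -
  have g_pos: "0 < g s" if "s \<le> j" for s
    using that
  proof (induction s)
    case (Suc s)
    then show ?case using g_mono[of s] by simp
  qed (use g0 in simp)
  show "0 \<le> g_prev j g" "g_prev j g < g j"
    using g_pos[of "j - 1"] g_mono[of "j - 1"] g0 by (auto simp: g_prev_def)
qed

lemma sigma_bound_imp_boundary_coeff_nonneg:
  fixes p q \<sigma> :: real
  assumes p: "0 \<le> p" "p < q" and \<sigma>_lo: "q / (2 * q - p) \<le> \<sigma>" and \<sigma>_hi: "\<sigma> \<le> 1"
  shows "\<sigma>^2 * p \<le> (2 * \<sigma> - 1) * q"
proof -
  have "q \<le> \<sigma> * (2 * q - p)"
    using \<sigma>_lo p by (simp add: divide_le_eq)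
  then have lin: "\<sigma> * p \<le> (2 * \<sigma> - 1) * q"
    by (simp add: algebra_simps)
  have "0 \<le> \<sigma>"
    using \<sigma>_lo p by (smt (verit) divide_nonneg_pos)
  then have "\<sigma>^2 * p \<le> \<sigma> * p"
    using \<sigma>_hi p by (simp add: power2_eq_square mult_right_le_one_le mult_right_mono)
  with lin show ?thesis by linarith
qed

theorem corollary1:
  fixes j :: nat and g v :: "nat \<Rightarrow> real" and \<sigma> :: real
  assumes g0: "g 0 > 0"
    and gmono: "\<And>s. s < j \<Longrightarrow> g s < g (Suc s)"
    and \<sigma>_lo: "g j / (2 * g j - g_prev j g) \<le> \<sigma>"
    and \<sigma>_hi: "\<sigma> \<le> 1"
  shows "(\<sigma> * v (Suc j) + (1 - \<sigma>) * v j) * gDelta j g v \<ge> gDelta_sq j g v / 2"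
proof -
  define x where "x = \<sigma> * v (Suc j) + (1 - \<sigma>) * v j"
  define d where "d = v (Suc j) - v j"
  have "0 \<le> d^2 * ((2 * \<sigma> - 1) * g j - \<sigma>^2 * g_prev j g)"
    using sigma_bound_imp_boundary_coeff_nonneg[OF g_prev_bounds[OF g0 gmono] \<sigma>_lo \<sigma>_hi] by simp
  also have "\<dots> = (x - v j)^2 * (g j - g_prev j g) - (x - v (Suc j))^2 * g j"
    by (simp add: x_def d_def power2_eq_square algebra_simps)
  also have "\<dots> \<le> (\<Sum>s=0..j. ((x - v s)^2 - (x - v (Suc s))^2) * g s)"
    using sum_diff_weighted_ge_boundary[of "\<lambda>s. (x - v s)^2" g j] g0 gmono
    by (simp add: less_imp_le)
  finally show ?thesis
    using gDelta_completed_square[of x j g v] by (simp add: x_def)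
qed

end
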